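(* Let $f\in L^2(\mathbb R)$, $p,q\in\mathbb Z$, $g:=D^pT^qf$ and $h:=T^qD^pf$. Then for all $l\in\mathbb I$, $k\in\mathbb Z$: $$\hat g^{(k)}_l=\sum_{s,j,m}\overline{\alpha^{s,j,m}_{l,k}}\sum_{i,n}\alpha^{s,j,m-p}_{i,n+q}\hat f^{(n)}_i,\qquad \hat h^{(k)}_l=\sum_{s,j,m}\overline{\alpha^{s,j,m}_{l,k-q}}\sum_{i,n}\alpha^{s,j,m-p}_{i,n}\hat f^{(n)}_i,$$ and for all $\sigma\in\{+,-\}$, $l\in\mathbb J$, $k\in\mathbb Z$: $$\tilde g^{(k)}_{\sigma,l}=\sum_{i,n}\alpha^{\sigma,l,k-p}_{i,n}\sum_{s,j,m}\overline{\alpha^{s,j,m}_{i,n-q}}\tilde f^{(m)}_{s,j},\qquad \tilde h^{(k)}_{\sigma,l}=\sum_{i,n}\alpha^{\sigma,l,k}_{i,n}\sum_{s,j,m}\overline{\alpha^{s,j,m+p}_{i,n-q}}\tilde f^{(m)}_{s,j}.$$ Here $s$ ranges over $\{+,-\}$, $j$ over $\mathbb J$, $i$ over $\mathbb I$, and $m,n$ over $\mathbb Z$.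
   Context: On $L^2(\mathbb R)$ let $(Df)(x)=2^{1/2}f(2x)$ and $(Tf)(x)=f(x-1)$. Let $\mathbb I$ be a countable index set and $\{L^{(0)}_i\}_{i\in\mathbb I}$ an orthonormal basis of $L^2[0,1)$ (extended by zero), $L^{(n)}_i(x)=L^{(0)}_i(x-n)$ for $n\in\mathbb Z$, and for $f\in L^2(\mathbb R)$, $\hat f^{(n)}_i=\int_{\mathbb R}f\overline{L^{(n)}_i}$. Let $\mathbb J$ be a countable index set, $\{K^{(0)}_{+,j}\}_{j\in\mathbb J}$ an orthonormal basis of $L^2[1,2)$, $\{K^{(0)}_{-,j}\}_{j\in\mathbb J}$ an orthonormal basis of $L^2(-2,-1]$ (extended by zero), $K^{(m)}_{s,j}(x)=2^{m/2}K^{(0)}_{s,j}(2^mx)$ for $m\in\mathbb Z$, and $\tilde f^{(m)}_{s,j}=\int_{\mathbb R}f\overline{K^{(m)}_{s,j}}$. Both $\{L^{(n)}_i\}_{i,n}$ and $\{K^{(m)}_{s,j}\}_{s,j,m}$ are orthonormal bases of $L^2(\mathbb R)$. The change-of-basis matrix is $\alpha^{s,j,m}_{i,n}:=\int_{\mathbb R}L^{(n)}_i(x)\overline{K^{(m)}_{s,j}(x)}\,dx$. The coordinates $\hat g^{(n)}_i,\hat h^{(n)}_i,\tilde g^{(m)}_{s,j},\tilde h^{(m)}_{s,j}$ of $g,h$ are defined in the same way as those of $f$. *)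

theory Defs
  imports "HOL-Analysis.Analysis"
begin

definition sq_int :: "(real \<Rightarrow> complex) \<Rightarrow> bool" where
  "sq_int f \<longleftrightarrow> f \<in> borel_measurable lborel \<and> integrable lborel (\<lambda>x. (cmod (f x))^2)"

definition ip :: "(real \<Rightarrow> complex) \<Rightarrow> (real \<Rightarrow> complex) \<Rightarrow> complex" where
  "ip f g = (LINT x|lborel. f x * cnj (g x))"

definition onb_on :: "real set \<Rightarrow> ('i \<Rightarrow> real \<Rightarrow> complex) \<Rightarrow> bool" where
  "onb_on S B \<longleftrightarrow>
     (\<forall>i. sq_int (B i) \<and> (\<forall>x. x \<notin> S \<longrightarrow> B i x = 0)) \<and>
     (\<forall>i i'. ip (B i) (B i') = (if i = i' then 1 else 0)) \<and>
     (\<forall>f. sq_int f \<and> (\<forall>x. x \<notin> S \<longrightarrow> f x = 0) \<and> (\<forall>i. ip f (B i) = 0)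
          \<longrightarrow> (AE x in lborel. f x = 0))"

definition dil :: "(real \<Rightarrow> complex) \<Rightarrow> real \<Rightarrow> complex" where
  "dil f x = complex_of_real (sqrt 2) * f (2 * x)"

definition dil_inv :: "(real \<Rightarrow> complex) \<Rightarrow> real \<Rightarrow> complex" where
  "dil_inv f x = f (x / 2) / complex_of_real (sqrt 2)"

definition transl :: "(real \<Rightarrow> complex) \<Rightarrow> real \<Rightarrow> complex" where
  "transl f x = f (x - 1)"

definition transl_inv :: "(real \<Rightarrow> complex) \<Rightarrow> real \<Rightarrow> complex" where
  "transl_inv f x = f (x + 1)"

definition int_pow :: "('a \<Rightarrow> 'a) \<Rightarrow> ('a \<Rightarrow> 'a) \<Rightarrow> int \<Rightarrow> 'a \<Rightarrow> 'a" where
  "int_pow F Finv p = (if 0 \<le> p then F ^^ nat p else Finv ^^ nat (- p))"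

definition Dp :: "int \<Rightarrow> (real \<Rightarrow> complex) \<Rightarrow> real \<Rightarrow> complex" where
  "Dp p = int_pow dil dil_inv p"

definition Tq :: "int \<Rightarrow> (real \<Rightarrow> complex) \<Rightarrow> real \<Rightarrow> complex" where
  "Tq q = int_pow transl transl_inv q"

text \<open>The two bases: L^(n)_i and K^(m)_(s,j); the sign s is a bool (True = +, False = -).\<close>
definition Lb :: "('i \<Rightarrow> real \<Rightarrow> complex) \<Rightarrow> int \<Rightarrow> 'i \<Rightarrow> real \<Rightarrow> complex" where
  "Lb L0 n i x = L0 i (x - real_of_int n)"

definition Kb :: "(bool \<Rightarrow> 'j \<Rightarrow> real \<Rightarrow> complex) \<Rightarrow> int \<Rightarrow> bool \<Rightarrow> 'j \<Rightarrow> real \<Rightarrow> complex" where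
  "Kb K0 m s j x = complex_of_real (2 powr (real_of_int m / 2)) * K0 s j (2 powr (real_of_int m) * x)"

definition alpha :: "('i \<Rightarrow> real \<Rightarrow> complex) \<Rightarrow> (bool \<Rightarrow> 'j \<Rightarrow> real \<Rightarrow> complex)
                     \<Rightarrow> bool \<Rightarrow> 'j \<Rightarrow> int \<Rightarrow> 'i \<Rightarrow> int \<Rightarrow> complex" where
  "alpha L0 K0 s j m i n = ip (Lb L0 n i) (Kb K0 m s j)"

definition fhat :: "('i \<Rightarrow> real \<Rightarrow> complex) \<Rightarrow> (real \<Rightarrow> complex) \<Rightarrow> int \<Rightarrow> 'i \<Rightarrow> complex" where
  "fhat L0 f n i = ip f (Lb L0 n i)"

definition ftil :: "(bool \<Rightarrow> 'j \<Rightarrow> real \<Rightarrow> complex) \<Rightarrow> (real \<Rightarrow> complex) \<Rightarrow> int \<Rightarrow> bool \<Rightarrow> 'j \<Rightarrow> complex" where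
  "ftil K0 f m s j = ip f (Kb K0 m s j)"

end

theory Submission
  imports Defs "HOL-Probability.Probability"
begin

text \<open>Both families are complete orthonormal systems of L^2(R): the translates [n, n+1) tile R,
  and the dilates 2^(-m) ([1,2) \<union> (-2,-1]) tile R - {0}. Hence Parseval's identity
  <u, v> = \<Sum>_b <u, B_b> <B_b, v> holds in both bases, with absolute summability. Since T and D are
  unitary with T L^(n) = L^(n+1) and D K^(m) = K^(m+1), every coordinate of D^p T^q f or T^q D^p f
  is a coordinate of f with shifted indices, after moving one power of D or T onto a basis
  vector; expanding once in each basis gives the four formulas.

  Parseval's identity rests on the completeness of L^2: multiplied by a positive square-integrable
  weight, an L^2-Cauchy sequence becomes L^1-Cauchy, so a subsequence converges almost everywhere,
  and Fatou's lemma shows that the pointwise limit is also the L^2 limit.\<close>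

section \<open>Square-integrable functions\<close>

definition sqnorm :: "(real \<Rightarrow> complex) \<Rightarrow> real" where
  "sqnorm f = (LINT x|lborel. (cmod (f x))\<^sup>2)"

lemma sqnorm_nonneg: "0 \<le> sqnorm f"
  unfolding sqnorm_def by simp

lemma borel_measurable_cnj [measurable (raw)]:
  "f \<in> borel_measurable M \<Longrightarrow> (\<lambda>x. cnj (f x)) \<in> borel_measurable M"
  by (intro borel_measurable_continuous_on[where f = cnj] continuous_intros) auto

lemma sq_intD:
  "sq_int f \<Longrightarrow> f \<in> borel_measurable lborel"
  "sq_int f \<Longrightarrow> integrable lborel (\<lambda>x. (cmod (f x))\<^sup>2)"
  by (auto simp: sq_int_def)

lemma sq_int_add:
  assumes "sq_int f" "sq_int g"
  shows "sq_int (\<lambda>x. f x + g x)"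
  unfolding sq_int_def
proof
  show m: "(\<lambda>x. f x + g x) \<in> borel_measurable lborel"
    using assms by (auto simp: sq_int_def)
  show "integrable lborel (\<lambda>x. (cmod (f x + g x))\<^sup>2)"
  proof (rule Bochner_Integration.integrable_bound)
    show "integrable lborel (\<lambda>x. 2 * (cmod (f x))\<^sup>2 + 2 * (cmod (g x))\<^sup>2)"
      using assms by (auto simp: sq_int_def)
    show "(\<lambda>x. (cmod (f x + g x))\<^sup>2) \<in> borel_measurable lborel"
      using m by measurable
    show "AE x in lborel. norm ((cmod (f x + g x))\<^sup>2)
        \<le> norm (2 * (cmod (f x))\<^sup>2 + 2 * (cmod (g x))\<^sup>2)"
    proof (rule AE_I2)
      fix x
      have "(cmod (f x + g x))\<^sup>2 \<le> (cmod (f x) + cmod (g x))\<^sup>2"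
        by (simp add: norm_triangle_ineq power_mono)
      also have "\<dots> \<le> 2 * (cmod (f x))\<^sup>2 + 2 * (cmod (g x))\<^sup>2"
        using sum_squares_bound[of "cmod (f x)" "cmod (g x)"] unfolding power2_sum by linarith
      finally show "norm ((cmod (f x + g x))\<^sup>2) \<le> norm (2 * (cmod (f x))\<^sup>2 + 2 * (cmod (g x))\<^sup>2)"
        by simp
    qed
  qed
qed

lemma sq_int_cmult: "sq_int f \<Longrightarrow> sq_int (\<lambda>x. c * f x)"
  unfolding sq_int_def by (auto simp: norm_mult power_mult_distrib)

lemma sq_int_diff: "sq_int f \<Longrightarrow> sq_int g \<Longrightarrow> sq_int (\<lambda>x. f x - g x)"
  using sq_int_add[of f "\<lambda>x. - 1 * g x"] sq_int_cmult[of g "- 1"] by simp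

lemma sq_int_lincomb:
  assumes "\<And>b. b \<in> F \<Longrightarrow> sq_int (B b)"
  shows "sq_int (\<lambda>x. \<Sum>b\<in>F. c b * B b x)"
  using assms
proof (induction F rule: infinite_finite_induct)
  case (insert b F)
  then show ?case by (simp add: sq_int_add sq_int_cmult)
qed (simp_all add: sq_int_def)

lemma integrable_mult_cnj:
  assumes "sq_int f" "sq_int g"
  shows "integrable lborel (\<lambda>x. f x * cnj (g x))"
proof (rule Bochner_Integration.integrable_bound[where f = "\<lambda>x. (cmod (f x))\<^sup>2 + (cmod (g x))\<^sup>2"])
  show "integrable lborel (\<lambda>x. (cmod (f x))\<^sup>2 + (cmod (g x))\<^sup>2)"
    using assms by (auto simp: sq_int_def)
  show "(\<lambda>x. f x * cnj (g x)) \<in> borel_measurable lborel"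
    using assms by (intro borel_measurable_times borel_measurable_cnj sq_intD)
  show "AE x in lborel. norm (f x * cnj (g x)) \<le> norm ((cmod (f x))\<^sup>2 + (cmod (g x))\<^sup>2)"
  proof (rule AE_I2)
    fix x
    have "cmod (f x) * cmod (g x) \<le> (cmod (f x))\<^sup>2 + (cmod (g x))\<^sup>2"
      using sum_squares_bound[of "cmod (f x)" "cmod (g x)"]
        mult_nonneg_nonneg[OF norm_ge_zero norm_ge_zero, of "f x" "g x"] by linarith
    then show "norm (f x * cnj (g x)) \<le> norm ((cmod (f x))\<^sup>2 + (cmod (g x))\<^sup>2)"
      by (simp add: norm_mult)
  qed
qed

lemma ip_swap: "ip g f = cnj (ip f g)"
  unfolding ip_def
  using Bochner_Integration.integral_cnj[of lborel "\<lambda>x. f x * cnj (g x)"]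
  by (simp add: mult.commute del: integral_cnj)

lemma ip_add_left:
  "sq_int f \<Longrightarrow> sq_int g \<Longrightarrow> sq_int h \<Longrightarrow> ip (\<lambda>x. f x + g x) h = ip f h + ip g h"
  unfolding ip_def by (simp add: distrib_right integrable_mult_cnj)

lemma ip_diff_left:
  "sq_int f \<Longrightarrow> sq_int g \<Longrightarrow> sq_int h \<Longrightarrow> ip (\<lambda>x. f x - g x) h = ip f h - ip g h"
  unfolding ip_def by (simp add: left_diff_distrib integrable_mult_cnj)

lemma ip_diff_right:
  "sq_int f \<Longrightarrow> sq_int g \<Longrightarrow> sq_int h \<Longrightarrow> ip h (\<lambda>x. f x - g x) = ip h f - ip h g"
  using ip_diff_left[of f g h] by (simp add: ip_swap[of h])

lemma ip_cmult_left: "ip (\<lambda>x. c * f x) h = c * ip f h"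
  unfolding ip_def by (simp add: mult.assoc)

lemma ip_lincomb_left:
  assumes "\<And>b. b \<in> F \<Longrightarrow> sq_int (B b)" "sq_int h"
  shows "ip (\<lambda>x. \<Sum>b\<in>F. c b * B b x) h = (\<Sum>b\<in>F. c b * ip (B b) h)"
  using assms
proof (induction F rule: infinite_finite_induct)
  case (insert b F)
  then have "ip (\<lambda>x. c b * B b x + (\<Sum>b\<in>F. c b * B b x)) h
      = ip (\<lambda>x. c b * B b x) h + ip (\<lambda>x. \<Sum>b\<in>F. c b * B b x) h"
    by (intro ip_add_left sq_int_cmult sq_int_lincomb) auto
  with insert show ?case
    by (simp add: ip_cmult_left)
qed (simp_all add: ip_def)

lemma ip_lincomb_right:
  assumes "\<And>b. b \<in> F \<Longrightarrow> sq_int (B b)" "sq_int h"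
  shows "ip h (\<lambda>x. \<Sum>b\<in>F. c b * B b x) = (\<Sum>b\<in>F. cnj (c b) * ip h (B b))"
  using ip_lincomb_left[OF assms, where c = c] by (simp add: ip_swap[of h])

lemma ip_self: "ip f f = complex_of_real (sqnorm f)"
proof -
  have "ip f f = (LINT x|lborel. complex_of_real ((cmod (f x))\<^sup>2))"
    unfolding ip_def by (rule Bochner_Integration.integral_cong[OF refl complex_norm_square[symmetric]])
  also have "\<dots> = complex_of_real (sqnorm f)"
    unfolding sqnorm_def by (rule integral_complex_of_real)
  finally show ?thesis .
qed

lemma sqnorm_diff_expand:
  assumes "sq_int f" "sq_int g"
  shows "complex_of_real (sqnorm (\<lambda>x. f x - g x)) = ip f f - ip f g - ip g f + ip g g"
  using assms by (simp add: ip_self[symmetric] ip_diff_left ip_diff_right sq_int_diff)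

lemma integral_cmod_mult_cnj_le:
  assumes "sq_int u" "sq_int v"
  shows "(LINT x|lborel. cmod (u x * cnj (v x))) \<le> sqrt (sqnorm u) * sqrt (sqnorm v)"
proof -
  have [measurable]: "u \<in> borel_measurable borel" "v \<in> borel_measurable borel"
    using assms by (simp_all add: sq_int_def)
  define I where "I = (LINT x|lborel. cmod (u x * cnj (v x)))"
  have "ennreal I = (\<integral>\<^sup>+x. ennreal (cmod (u x * cnj (v x))) \<partial>lborel)"
    unfolding I_def using integrable_mult_cnj[OF assms]
    by (intro nn_integral_eq_integral[symmetric]) auto
  also have "\<dots> = (\<integral>\<^sup>+x. ennreal (cmod (u x)) * ennreal (cmod (v x)) \<partial>lborel)"
    by (simp add: norm_mult ennreal_mult)
  finally have I: "ennreal I = \<dots>" .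
  have sq: "ennreal (sqnorm w) = (\<integral>\<^sup>+x. ennreal (cmod (w x)) ^ 2 \<partial>lborel)" if "sq_int w" for w
  proof -
    have "ennreal (sqnorm w) = (\<integral>\<^sup>+x. ennreal ((cmod (w x))\<^sup>2) \<partial>lborel)"
      using that unfolding sqnorm_def sq_int_def by (intro nn_integral_eq_integral[symmetric]) auto
    then show ?thesis
      by (simp add: ennreal_power)
  qed
  have "(ennreal I)\<^sup>2 \<le> ennreal (sqnorm u) * ennreal (sqnorm v)"
    unfolding I sq[OF assms(1)] sq[OF assms(2)] by (rule Cauchy_Schwarz_nn_integral) auto
  moreover have "0 \<le> I"
    unfolding I_def by simp
  ultimately have "I\<^sup>2 \<le> sqnorm u * sqnorm v"
    using sqnorm_nonneg[of u] sqnorm_nonneg[of v]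
    by (simp only: ennreal_power ennreal_mult[symmetric] ennreal_le_iff mult_nonneg_nonneg)
  then have "I \<le> sqrt (sqnorm u * sqnorm v)"
    by (rule real_le_rsqrt)
  then show ?thesis
    unfolding I_def real_sqrt_mult .
qed

lemma cmod_ip_le: "sq_int u \<Longrightarrow> sq_int v \<Longrightarrow> cmod (ip u v) \<le> sqrt (sqnorm u) * sqrt (sqnorm v)"
  unfolding ip_def by (rule order_trans[OF integral_norm_bound integral_cmod_mult_cnj_le])

section \<open>Completeness of \<open>L\<^sup>2\<close>\<close>

text \<open>Any positive square-integrable weight would do.\<close>

definition gauss_weight :: "real \<Rightarrow> complex" where
  "gauss_weight x = complex_of_real (sqrt (std_normal_density x))"

lemma sq_int_gauss_weight: "sq_int gauss_weight"
proof -
  have "(\<lambda>x. (cmod (gauss_weight x))\<^sup>2) = std_normal_density"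
    by (auto simp: gauss_weight_def normal_density_nonneg)
  then show ?thesis
    unfolding sq_int_def gauss_weight_def by auto
qed

lemma gauss_weight_nonzero: "gauss_weight x \<noteq> 0"
  using normal_density_pos[of 1 0 x] by (simp add: gauss_weight_def)

lemma sq_int_Cauchy_weighted_L1_Cauchy:
  fixes s :: "nat \<Rightarrow> real \<Rightarrow> complex"
  assumes sq: "\<And>n. sq_int (s n)" and w: "sq_int w"
    and cau: "\<And>e. e > 0 \<Longrightarrow> \<exists>N. \<forall>i\<ge>N. \<forall>j\<ge>N. sqnorm (\<lambda>x. s i x - s j x) < e"
    and "e > 0"
  shows "\<exists>N. \<forall>i\<ge>N. \<forall>j\<ge>N. (LINT x|lborel. norm (s i x * cnj (w x) - s j x * cnj (w x))) < e"
proof -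
  define W where "W = sqnorm w"
  have W: "0 \<le> W"
    unfolding W_def by (rule sqnorm_nonneg)
  obtain N where N: "\<And>i j. i \<ge> N \<Longrightarrow> j \<ge> N \<Longrightarrow> sqnorm (\<lambda>x. s i x - s j x) < e\<^sup>2 / (W + 1)"
    using cau[of "e\<^sup>2 / (W + 1)"] \<open>e > 0\<close> W by auto
  have "(LINT x|lborel. norm (s i x * cnj (w x) - s j x * cnj (w x))) < e" if "i \<ge> N" "j \<ge> N" for i j
  proof -
    define a where "a = sqnorm (\<lambda>x. s i x - s j x)"
    have "a * W \<le> a * (W + 1)"
      using sqnorm_nonneg[of "\<lambda>x. s i x - s j x"] unfolding a_def[symmetric]
      by (intro mult_left_mono) auto
    also have "\<dots> < e\<^sup>2"
      using N[OF that] W by (simp add: a_def field_simps)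
    finally have "sqrt a * sqrt W < e"
      using \<open>e > 0\<close> by (simp flip: real_sqrt_mult add: real_sqrt_less_iff real_less_lsqrt)
    moreover have "(LINT x|lborel. norm (s i x * cnj (w x) - s j x * cnj (w x))) \<le> sqrt a * sqrt W"
      using integral_cmod_mult_cnj_le[OF sq_int_diff[OF sq sq] w]
      by (simp add: a_def W_def left_diff_distrib)
    ultimately show ?thesis
      by linarith
  qed
  then show ?thesis
    by blast
qed

lemma sq_int_Cauchy_AE_convergent_subseq:
  fixes s :: "nat \<Rightarrow> real \<Rightarrow> complex"
  assumes sq: "\<And>n. sq_int (s n)"
    and cau: "\<And>e. e > 0 \<Longrightarrow> \<exists>N. \<forall>i\<ge>N. \<forall>j\<ge>N. sqnorm (\<lambda>x. s i x - s j x) < e"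
  obtains r g where "strict_mono r" "g \<in> borel_measurable borel"
    "AE x in lborel. (\<lambda>i. s (r i) x) \<longlonglongrightarrow> g x"
proof -
  have [measurable]: "s n \<in> borel_measurable borel" for n
    using sq by (simp add: sq_int_def)
  define u where "u n x = s n x * cnj (gauss_weight x)" for n x
  have "integrable lborel (u n)" for n
    unfolding u_def by (rule integrable_mult_cnj[OF sq sq_int_gauss_weight])
  moreover have "\<exists>N. \<forall>i\<ge>N. \<forall>j\<ge>N. (LINT x|lborel. norm (u i x - u j x)) < e" if "e > 0" for e
    unfolding u_def by (rule sq_int_Cauchy_weighted_L1_Cauchy[OF sq sq_int_gauss_weight cau that])
  ultimately obtain r where r: "strict_mono r" and AE_Cauchy: "AE x in lborel. Cauchy (\<lambda>i. u (r i) x)"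
    using cauchy_L1_AE_cauchy_subseq[of lborel u] by metis
  have convergent: "(\<lambda>i. s (r i) x) \<longlonglongrightarrow> lim (\<lambda>i. s (r i) x)" if cauchy: "Cauchy (\<lambda>i. u (r i) x)" for x
  proof -
    obtain L where "(\<lambda>i. u (r i) x) \<longlonglongrightarrow> L"
      using cauchy by (auto simp: Cauchy_convergent_iff convergent_def)
    then have "(\<lambda>i. u (r i) x / cnj (gauss_weight x)) \<longlonglongrightarrow> L / cnj (gauss_weight x)"
      by (intro tendsto_divide tendsto_const) (simp_all add: gauss_weight_nonzero)
    then have "convergent (\<lambda>i. s (r i) x)"
      by (auto simp: convergent_def u_def gauss_weight_nonzero)
    then show ?thesis
      by (simp add: convergent_LIMSEQ_iff)
  qed
  have "AE x in lborel. (\<lambda>i. s (r i) x) \<longlonglongrightarrow> lim (\<lambda>i. s (r i) x)"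
    using AE_Cauchy by (rule AE_mp) (intro AE_I2 impI convergent)
  then show ?thesis
    by (rule that[OF r, rotated]) measurable
qed

lemma nn_integral_sq_diff_AE_limit_le:
  fixes s :: "nat \<Rightarrow> real \<Rightarrow> complex"
  assumes sq: "\<And>n. sq_int (s n)" and r: "strict_mono r"
    and g [measurable]: "g \<in> borel_measurable borel"
    and lim: "AE x in lborel. (\<lambda>i. s (r i) x) \<longlonglongrightarrow> g x"
    and bound: "\<And>i. i \<ge> n \<Longrightarrow> sqnorm (\<lambda>x. s i x - s n x) \<le> e"
  shows "(\<integral>\<^sup>+x. ennreal ((cmod (g x - s n x))\<^sup>2) \<partial>lborel) \<le> ennreal e"
proof -
  have [measurable]: "s i \<in> borel_measurable borel" for i
    using sq by (simp add: sq_int_def)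
  have "(\<integral>\<^sup>+x. ennreal ((cmod (g x - s n x))\<^sup>2) \<partial>lborel)
      = (\<integral>\<^sup>+x. liminf (\<lambda>i. ennreal ((cmod (s (r i) x - s n x))\<^sup>2)) \<partial>lborel)"
  proof (rule nn_integral_cong_AE)
    show "AE x in lborel. ennreal ((cmod (g x - s n x))\<^sup>2)
        = liminf (\<lambda>i. ennreal ((cmod (s (r i) x - s n x))\<^sup>2))"
      using lim
    proof (rule AE_mp, intro AE_I2 impI)
      fix x
      assume "(\<lambda>i. s (r i) x) \<longlonglongrightarrow> g x"
      then have "(\<lambda>i. ennreal ((cmod (s (r i) x - s n x))\<^sup>2)) \<longlonglongrightarrow> ennreal ((cmod (g x - s n x))\<^sup>2)"
        by (intro tendsto_ennrealI tendsto_intros)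
      then have "liminf (\<lambda>i. ennreal ((cmod (s (r i) x - s n x))\<^sup>2)) = ennreal ((cmod (g x - s n x))\<^sup>2)"
        by (rule lim_imp_Liminf[rotated]) simp
      then show "ennreal ((cmod (g x - s n x))\<^sup>2) = liminf (\<lambda>i. ennreal ((cmod (s (r i) x - s n x))\<^sup>2))"
        by simp
    qed
  qed
  also have "\<dots> \<le> liminf (\<lambda>i. \<integral>\<^sup>+x. ennreal ((cmod (s (r i) x - s n x))\<^sup>2) \<partial>lborel)"
    by (rule nn_integral_liminf) measurable
  also have "\<dots> \<le> ennreal e"
  proof (rule Liminf_le)
    show "\<forall>\<^sub>F i in sequentially. (\<integral>\<^sup>+x. ennreal ((cmod (s (r i) x - s n x))\<^sup>2) \<partial>lborel) \<le> ennreal e"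
    proof (rule eventually_sequentiallyI)
      fix i
      assume "n \<le> i"
      then have "n \<le> r i"
        using strict_mono_imp_increasing[OF r, of i] by linarith
      have "(\<integral>\<^sup>+x. ennreal ((cmod (s (r i) x - s n x))\<^sup>2) \<partial>lborel) = ennreal (sqnorm (\<lambda>x. s (r i) x - s n x))"
        unfolding sqnorm_def using sq_int_diff[OF sq sq]
        by (intro nn_integral_eq_integral) (auto simp: sq_int_def)
      also have "\<dots> \<le> ennreal e"
        using bound[OF \<open>n \<le> r i\<close>] by (rule ennreal_leI)
      finally show "(\<integral>\<^sup>+x. ennreal ((cmod (s (r i) x - s n x))\<^sup>2) \<partial>lborel) \<le> ennreal e" .
    qed
  qed simp
  finally show ?thesis .
qed

lemma sqnorm_diff_AE_limit_le:
  fixes s :: "nat \<Rightarrow> real \<Rightarrow> complex"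
  assumes sq: "\<And>n. sq_int (s n)" and r: "strict_mono r"
    and g [measurable]: "g \<in> borel_measurable borel"
    and lim: "AE x in lborel. (\<lambda>i. s (r i) x) \<longlonglongrightarrow> g x"
    and bound: "\<And>i. i \<ge> n \<Longrightarrow> sqnorm (\<lambda>x. s i x - s n x) \<le> e"
  shows "sq_int (\<lambda>x. g x - s n x)" "sqnorm (\<lambda>x. g x - s n x) \<le> e"
proof -
  have [measurable]: "s n \<in> borel_measurable borel"
    using sq by (simp add: sq_int_def)
  note le = nn_integral_sq_diff_AE_limit_le[OF sq r g lim bound]
  have int: "integrable lborel (\<lambda>x. (cmod (g x - s n x))\<^sup>2)"
    by (rule integrableI_nonneg) (use le in \<open>auto simp: top.not_eq_extremum intro: le_less_trans\<close>)
  then show "sq_int (\<lambda>x. g x - s n x)"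
    unfolding sq_int_def by auto
  have "0 \<le> e"
    using bound[of n] sqnorm_nonneg[of "\<lambda>x. s n x - s n x"] by linarith
  moreover have "ennreal (sqnorm (\<lambda>x. g x - s n x)) \<le> ennreal e"
    using le int unfolding sqnorm_def by (subst nn_integral_eq_integral[symmetric]) auto
  ultimately show "sqnorm (\<lambda>x. g x - s n x) \<le> e"
    by (simp add: ennreal_le_iff)
qed

theorem sq_int_complete:
  fixes s :: "nat \<Rightarrow> real \<Rightarrow> complex"
  assumes sq: "\<And>n. sq_int (s n)"
    and cau: "\<And>e. e > 0 \<Longrightarrow> \<exists>N. \<forall>i\<ge>N. \<forall>j\<ge>N. sqnorm (\<lambda>x. s i x - s j x) < e"
  obtains g where "sq_int g" "(\<lambda>n. sqnorm (\<lambda>x. g x - s n x)) \<longlonglongrightarrow> 0"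
proof -
  obtain r g where r: "strict_mono r" and g: "g \<in> borel_measurable borel"
    and lim: "AE x in lborel. (\<lambda>i. s (r i) x) \<longlonglongrightarrow> g x"
    using sq_int_Cauchy_AE_convergent_subseq[OF sq cau] by metis
  have close: "sq_int (\<lambda>x. g x - s n x) \<and> sqnorm (\<lambda>x. g x - s n x) \<le> e"
    if N: "\<And>i j. i \<ge> N \<Longrightarrow> j \<ge> N \<Longrightarrow> sqnorm (\<lambda>x. s i x - s j x) < e" and "n \<ge> N" for N n e
  proof -
    have "sqnorm (\<lambda>x. s i x - s n x) \<le> e" if "i \<ge> n" for i
      using N[of i n] \<open>n \<ge> N\<close> that by simp
    then show ?thesis
      using sqnorm_diff_AE_limit_le[OF sq r g lim] by blast
  qed
  obtain N1 where "\<And>i j. i \<ge> N1 \<Longrightarrow> j \<ge> N1 \<Longrightarrow> sqnorm (\<lambda>x. s i x - s j x) < 1"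
    using cau[of 1] by auto
  then have "sq_int (\<lambda>x. (g x - s N1 x) + s N1 x)"
    using close[of N1 1 N1] sq by (intro sq_int_add) auto
  moreover have "(\<lambda>n. sqnorm (\<lambda>x. g x - s n x)) \<longlonglongrightarrow> 0"
  proof (rule LIMSEQ_I)
    fix e :: real
    assume "e > 0"
    then obtain N where "\<And>i j. i \<ge> N \<Longrightarrow> j \<ge> N \<Longrightarrow> sqnorm (\<lambda>x. s i x - s j x) < e / 2"
      using cau[of "e / 2"] by auto
    then have "norm (sqnorm (\<lambda>x. g x - s n x) - 0) < e" if "n \<ge> N" for n
      using close[of N "e / 2" n] that \<open>e > 0\<close> sqnorm_nonneg[of "\<lambda>x. g x - s n x"] by auto
    then show "\<exists>N. \<forall>n\<ge>N. norm (sqnorm (\<lambda>x. g x - s n x) - 0) < e"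
      by blast
  qed
  ultimately show ?thesis
    by (intro that) simp_all
qed

section \<open>Orthonormal systems and Parseval's identity\<close>

definition orthonormal_system :: "('b \<Rightarrow> real \<Rightarrow> complex) \<Rightarrow> bool" where
  "orthonormal_system B \<longleftrightarrow>
     (\<forall>b. sq_int (B b)) \<and> (\<forall>a b. ip (B a) (B b) = (if a = b then 1 else 0))"

definition complete_system :: "('b \<Rightarrow> real \<Rightarrow> complex) \<Rightarrow> bool" where
  "complete_system B \<longleftrightarrow> (\<forall>h. sq_int h \<and> (\<forall>b. ip h (B b) = 0) \<longrightarrow> (AE x in lborel. h x = 0))"

lemma orthonormal_systemD:
  "orthonormal_system B \<Longrightarrow> sq_int (B b)"
  "orthonormal_system B \<Longrightarrow> ip (B a) (B b) = (if a = b then 1 else 0)"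
  by (auto simp: orthonormal_system_def)

lemma ip_lincomb_orthonormal:
  assumes "orthonormal_system B" "finite G"
  shows "ip (\<lambda>x. \<Sum>b\<in>G. c b * B b x) (B a) = (if a \<in> G then c a else 0)"
proof -
  have "ip (\<lambda>x. \<Sum>b\<in>G. c b * B b x) (B a) = (\<Sum>b\<in>G. c b * ip (B b) (B a))"
    using assms by (intro ip_lincomb_left) (auto simp: orthonormal_systemD)
  also have "\<dots> = (\<Sum>b\<in>G. if b = a then c b else 0)"
    using assms by (intro sum.cong) (auto simp: orthonormal_systemD)
  finally show ?thesis
    using assms(2) by (simp add: sum.delta')
qed

lemma sqnorm_lincomb_orthonormal:
  assumes "orthonormal_system B" "finite G"
  shows "sqnorm (\<lambda>x. \<Sum>b\<in>G. c b * B b x) = (\<Sum>b\<in>G. (cmod (c b))\<^sup>2)"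
proof -
  let ?P = "\<lambda>x. \<Sum>b\<in>G. c b * B b x"
  have "complex_of_real (sqnorm ?P) = (\<Sum>b\<in>G. cnj (c b) * ip ?P (B b))"
    unfolding ip_self[symmetric] using assms
    by (intro ip_lincomb_right sq_int_lincomb) (auto simp: orthonormal_systemD)
  also have "\<dots> = (\<Sum>b\<in>G. complex_of_real ((cmod (c b))\<^sup>2))"
    using assms
    by (intro sum.cong refl) (simp add: ip_lincomb_orthonormal complex_norm_square mult.commute del: of_real_power)
  finally show ?thesis
    by (simp only: of_real_sum[symmetric] of_real_eq_iff)
qed

lemma sqnorm_diff_projection:
  assumes "orthonormal_system B" "finite G" "sq_int f"
  shows "sqnorm (\<lambda>x. f x - (\<Sum>b\<in>G. ip f (B b) * B b x)) = sqnorm f - (\<Sum>b\<in>G. (cmod (ip f (B b)))\<^sup>2)"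
proof -
  let ?P = "\<lambda>x. \<Sum>b\<in>G. ip f (B b) * B b x"
  define S where "S = (\<Sum>b\<in>G. (cmod (ip f (B b)))\<^sup>2)"
  have sq_int_P: "sq_int ?P"
    using assms by (intro sq_int_lincomb) (auto simp: orthonormal_systemD)
  have "ip f ?P = (\<Sum>b\<in>G. cnj (ip f (B b)) * ip f (B b))"
    using assms by (intro ip_lincomb_right) (auto simp: orthonormal_systemD)
  also have "\<dots> = complex_of_real S"
    unfolding S_def of_real_sum
    by (intro sum.cong refl) (simp add: complex_norm_square mult.commute del: of_real_power)
  finally have fP: "ip f ?P = complex_of_real S" .
  have "complex_of_real (sqnorm (\<lambda>x. f x - ?P x)) = ip f f - ip f ?P - ip ?P f + ip ?P ?P"
    by (rule sqnorm_diff_expand[OF assms(3) sq_int_P])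
  also have "\<dots> = complex_of_real (sqnorm f - S)"
    using fP ip_swap[of ?P f]
    by (simp add: ip_self sqnorm_lincomb_orthonormal[OF assms(1,2)] S_def)
  finally show ?thesis
    by (simp only: of_real_eq_iff S_def)
qed

lemma bessel_inequality:
  assumes "orthonormal_system B" "finite G" "sq_int f"
  shows "(\<Sum>b\<in>G. (cmod (ip f (B b)))\<^sup>2) \<le> sqnorm f"
  using sqnorm_diff_projection[OF assms] sqnorm_nonneg[of "\<lambda>x. f x - (\<Sum>b\<in>G. ip f (B b) * B b x)"]
  by linarith

lemma bessel_summable:
  assumes "orthonormal_system B" "sq_int f"
  shows "(\<lambda>b. (cmod (ip f (B b)))\<^sup>2) summable_on UNIV"
  using bessel_inequality[OF assms(1) _ assms(2)]
  by (intro nonneg_bdd_above_summable_on bdd_aboveI2) auto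

lemma ip_tendsto_zero:
  assumes "\<And>n. sq_int (w n)" "sq_int v" "(\<lambda>n. sqnorm (w n)) \<longlonglongrightarrow> 0"
  shows "(\<lambda>n. ip (w n) v) \<longlonglongrightarrow> 0"
proof (rule tendsto_norm_zero_cancel, rule Lim_null_comparison)
  show "\<forall>\<^sub>F n in sequentially. norm (norm (ip (w n) v)) \<le> sqrt (sqnorm (w n)) * sqrt (sqnorm v)"
    using cmod_ip_le[OF assms(1,2)] by simp
  have "(\<lambda>n. sqrt (sqnorm (w n))) \<longlonglongrightarrow> 0"
    using tendsto_real_sqrt[OF assms(3)] by simp
  then show "(\<lambda>n. sqrt (sqnorm (w n)) * sqrt (sqnorm v)) \<longlonglongrightarrow> 0"
    by (rule tendsto_mult_left_zero)
qed

lemma sqnorm_diff_commute: "sqnorm (\<lambda>x. f x - g x) = sqnorm (\<lambda>x. g x - f x)"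
  unfolding sqnorm_def by (simp add: norm_minus_commute)

lemma finite_to_nat_less: "finite {b::'b::countable. to_nat b < N}"
  using finite_vimageI[OF finite_lessThan[of N] inj_to_nat] by (simp add: vimage_def)

lemma filterlim_to_nat_less_finite_subsets:
  "filterlim (\<lambda>N. {b::'b::countable. to_nat b < N}) (finite_subsets_at_top UNIV) sequentially"
  unfolding filterlim_finite_subsets_at_top
proof (intro allI impI, elim conjE)
  fix X :: "'b set"
  assume "finite X"
  then obtain n where n: "\<forall>b\<in>X. to_nat b < n"
    using finite_nat_set_iff_bounded[of "to_nat ` X"] by auto
  show "\<forall>\<^sub>F N in sequentially. finite {b. to_nat b < N} \<and> X \<subseteq> {b. to_nat b < N} \<and> {b. to_nat b < N} \<subseteq> UNIV"
    using eventually_ge_at_top[of n] by eventually_elim (use n in \<open>auto simp: finite_to_nat_less\<close>)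
qed

lemma has_sum_tendsto_to_nat_partial_sums:
  fixes t :: "'b::countable \<Rightarrow> 'c::{comm_monoid_add, topological_space}"
  assumes "(t has_sum s) UNIV"
  shows "(\<lambda>N. \<Sum>b\<in>{b. to_nat b < N}. t b) \<longlonglongrightarrow> s"
  using assms unfolding has_sum_def by (rule filterlim_compose[OF _ filterlim_to_nat_less_finite_subsets])

definition partial_expansion ::
    "('b::countable \<Rightarrow> real \<Rightarrow> complex) \<Rightarrow> (real \<Rightarrow> complex) \<Rightarrow> nat \<Rightarrow> real \<Rightarrow> complex" where
  "partial_expansion B f N x = (\<Sum>b\<in>{b. to_nat b < N}. ip f (B b) * B b x)"

lemma sq_int_partial_expansion:
  "orthonormal_system B \<Longrightarrow> sq_int (partial_expansion B f N)"
  unfolding partial_expansion_def[abs_def] by (intro sq_int_lincomb) (auto simp: orthonormal_systemD)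

lemma ip_partial_expansion:
  assumes "orthonormal_system B" "to_nat b < N"
  shows "ip (partial_expansion B f N) (B b) = ip f (B b)"
  using ip_lincomb_orthonormal[OF assms(1) finite_to_nat_less] assms(2)
  unfolding partial_expansion_def[abs_def] by simp

lemma sqnorm_partial_expansion_diff:
  assumes "orthonormal_system B" "j \<le> i"
  shows "sqnorm (\<lambda>x. partial_expansion B f i x - partial_expansion B f j x)
    = (\<Sum>b\<in>{b. to_nat b < i}. (cmod (ip f (B b)))\<^sup>2) - (\<Sum>b\<in>{b. to_nat b < j}. (cmod (ip f (B b)))\<^sup>2)"
proof -
  have sub: "{b. to_nat b < j} \<subseteq> {b. to_nat b < i}"
    using assms(2) by auto
  have "sqnorm (\<lambda>x. partial_expansion B f i x - partial_expansion B f j x)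
      = sqnorm (\<lambda>x. \<Sum>b\<in>{b. to_nat b < i} - {b. to_nat b < j}. ip f (B b) * B b x)"
    unfolding partial_expansion_def by (simp add: sum_diff[OF finite_to_nat_less sub])
  also have "\<dots> = (\<Sum>b\<in>{b. to_nat b < i} - {b. to_nat b < j}. (cmod (ip f (B b)))\<^sup>2)"
    by (rule sqnorm_lincomb_orthonormal[OF assms(1) finite_Diff[OF finite_to_nat_less]])
  finally show ?thesis
    by (simp add: sum_diff[OF finite_to_nat_less sub])
qed

lemma partial_expansion_Cauchy:
  fixes B :: "'b::countable \<Rightarrow> real \<Rightarrow> complex"
  assumes ons: "orthonormal_system B" and f: "sq_int f" and "e > 0"
  shows "\<exists>N. \<forall>i\<ge>N. \<forall>j\<ge>N. sqnorm (\<lambda>x. partial_expansion B f i x - partial_expansion B f j x) < e"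
proof -
  define \<sigma> where "\<sigma> N = (\<Sum>b\<in>{b. to_nat b < N}. (cmod (ip f (B b)))\<^sup>2)" for N
  have "Cauchy \<sigma>"
    using has_sum_tendsto_to_nat_partial_sums[OF bessel_summable[OF ons f, THEN has_sum_infsum]]
    unfolding \<sigma>_def by (rule LIMSEQ_imp_Cauchy)
  then obtain N where N: "\<And>i j. i \<ge> N \<Longrightarrow> j \<ge> N \<Longrightarrow> dist (\<sigma> i) (\<sigma> j) < e"
    using \<open>e > 0\<close> unfolding Cauchy_def by blast
  have "sqnorm (\<lambda>x. partial_expansion B f i x - partial_expansion B f j x) \<le> dist (\<sigma> i) (\<sigma> j)"
    for i j
  proof (cases "j \<le> i")
    case True
    then show ?thesis
      using sqnorm_partial_expansion_diff[OF ons True] by (simp add: \<sigma>_def dist_real_def)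
  next
    case False
    then have "sqnorm (\<lambda>x. partial_expansion B f i x - partial_expansion B f j x) = \<sigma> j - \<sigma> i"
      using sqnorm_partial_expansion_diff[OF ons, of i j]
        sqnorm_diff_commute[of "partial_expansion B f i" "partial_expansion B f j"]
      by (simp add: \<sigma>_def)
    then show ?thesis
      by (simp add: dist_real_def)
  qed
  with N show ?thesis
    by (meson order_le_less_trans)
qed

lemma AE_eq_limit_partial_expansion:
  fixes B :: "'b::countable \<Rightarrow> real \<Rightarrow> complex"
  assumes ons: "orthonormal_system B" and cpl: "complete_system B"
    and f: "sq_int f" and g: "sq_int g"
    and lim: "(\<lambda>N. sqnorm (\<lambda>x. g x - partial_expansion B f N x)) \<longlonglongrightarrow> 0"
  shows "AE x in lborel. f x - g x = 0"
proof -
  have "ip g (B b) = ip f (B b)" for b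
  proof -
    have "(\<lambda>N. ip (\<lambda>x. g x - partial_expansion B f N x) (B b)) \<longlonglongrightarrow> 0"
      using ons by (intro ip_tendsto_zero sq_int_diff g sq_int_partial_expansion lim orthonormal_systemD)
    moreover have "\<forall>\<^sub>F N in sequentially. ip (\<lambda>x. g x - partial_expansion B f N x) (B b) = ip g (B b) - ip f (B b)"
      using eventually_gt_at_top[of "to_nat b"]
    proof eventually_elim
      case (elim N)
      then show ?case
        using ons g by (simp add: ip_diff_left sq_int_partial_expansion orthonormal_systemD ip_partial_expansion)
    qed
    ultimately have "(\<lambda>N. ip g (B b) - ip f (B b)) \<longlonglongrightarrow> 0"
      by (rule Lim_transform_eventually)
    then show ?thesis
      by (simp add: LIMSEQ_const_iff)
  qed
  then have "ip (\<lambda>x. f x - g x) (B b) = 0" for b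
    by (simp add: ip_diff_left f g orthonormal_systemD[OF ons])
  then show ?thesis
    using cpl sq_int_diff[OF f g] unfolding complete_system_def by blast
qed

lemma partial_expansion_tendsto:
  fixes B :: "'b::countable \<Rightarrow> real \<Rightarrow> complex"
  assumes ons: "orthonormal_system B" and cpl: "complete_system B" and f: "sq_int f"
  shows "(\<lambda>N. sqnorm (\<lambda>x. f x - partial_expansion B f N x)) \<longlonglongrightarrow> 0"
proof -
  obtain g where g: "sq_int g" and lim: "(\<lambda>N. sqnorm (\<lambda>x. g x - partial_expansion B f N x)) \<longlonglongrightarrow> 0"
    using sq_int_complete[OF sq_int_partial_expansion[OF ons] partial_expansion_Cauchy[OF ons f]] by blast
  have "AE x in lborel. f x - g x = 0"
    by (rule AE_eq_limit_partial_expansion[OF ons cpl f g lim])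
  then have "sqnorm (\<lambda>x. f x - partial_expansion B f N x) = sqnorm (\<lambda>x. g x - partial_expansion B f N x)" for N
    unfolding sqnorm_def
    by (intro integral_cong_AE borel_measurable_integrable sq_intD(2) sq_int_diff f g
        sq_int_partial_expansion[OF ons])
      (auto elim!: AE_mp)
  with lim show ?thesis
    by simp
qed

theorem parseval:
  fixes B :: "'b::countable \<Rightarrow> real \<Rightarrow> complex"
  assumes ons: "orthonormal_system B" and cpl: "complete_system B"
    and f: "sq_int f" and v: "sq_int v"
  shows "((\<lambda>b. ip f (B b) * ip (B b) v) has_sum ip f v) UNIV"
proof -
  have bound: "norm (ip f (B b) * ip (B b) v) \<le> (cmod (ip f (B b)))\<^sup>2 + (cmod (ip v (B b)))\<^sup>2" for b
  proof -
    have "cmod (ip f (B b)) * cmod (ip v (B b)) \<le> (cmod (ip f (B b)))\<^sup>2 + (cmod (ip v (B b)))\<^sup>2"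
      using sum_squares_bound[of "cmod (ip f (B b))" "cmod (ip v (B b))"]
        mult_nonneg_nonneg[OF norm_ge_zero norm_ge_zero, of "ip f (B b)" "ip v (B b)"] by linarith
    then show ?thesis
      by (simp add: norm_mult ip_swap[of "B b" v])
  qed
  have "(\<lambda>b. (cmod (ip f (B b)))\<^sup>2 + (cmod (ip v (B b)))\<^sup>2) summable_on UNIV"
    by (intro summable_on_add bessel_summable[OF ons f] bessel_summable[OF ons v])
  then have "(\<lambda>b. norm (ip f (B b) * ip (B b) v)) summable_on UNIV"
    by (rule summable_on_comparison_test) (simp_all add: bound)
  then have "(\<lambda>b. ip f (B b) * ip (B b) v) summable_on UNIV"
    by (rule abs_summable_summable)
  then obtain s where s: "((\<lambda>b. ip f (B b) * ip (B b) v) has_sum s) UNIV"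
    unfolding summable_on_def by blast
  have "(\<lambda>N. ip f v - ip (\<lambda>x. f x - partial_expansion B f N x) v) \<longlonglongrightarrow> ip f v - 0"
    using f v sq_int_partial_expansion[OF ons] partial_expansion_tendsto[OF ons cpl f]
    by (intro tendsto_diff tendsto_const ip_tendsto_zero sq_int_diff)
  moreover have "ip f v - ip (\<lambda>x. f x - partial_expansion B f N x) v
      = (\<Sum>b\<in>{b. to_nat b < N}. ip f (B b) * ip (B b) v)" for N
    using f v sq_int_partial_expansion[OF ons] ons
    by (simp add: ip_diff_left partial_expansion_def[abs_def] ip_lincomb_left orthonormal_systemD)
  ultimately have "(\<lambda>N. \<Sum>b\<in>{b. to_nat b < N}. ip f (B b) * ip (B b) v) \<longlonglongrightarrow> ip f v"
    by simp
  then have "s = ip f v"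
    using has_sum_tendsto_to_nat_partial_sums[OF s] LIMSEQ_unique by blast
  with s show ?thesis
    by simp
qed

section \<open>Translation and dilation\<close>

lemma Tq_apply: "Tq q u x = u (x - real_of_int q)"
proof -
  have "(transl ^^ n) u x = u (x - real n)" "(transl_inv ^^ n) u x = u (x + real n)" for n x
    by (induction n arbitrary: x) (auto simp: transl_def transl_inv_def algebra_simps)
  then show ?thesis
    by (auto simp: Tq_def int_pow_def)
qed

lemma dil_funpow: "(dil ^^ n) u x = complex_of_real (2 powr (real n / 2)) * u (2 powr real n * x)"
proof (induction n arbitrary: x)
  case (Suc n)
  have "(dil ^^ Suc n) u x = complex_of_real (sqrt 2) * (dil ^^ n) u (2 * x)"
    by (simp add: dil_def)
  also have "\<dots> = complex_of_real (sqrt 2 * 2 powr (real n / 2)) * u (2 powr real n * (2 * x))"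
    by (simp add: Suc)
  also have "sqrt 2 * 2 powr (real n / 2) = 2 powr (real (Suc n) / 2)"
    by (simp add: powr_half_sqrt[symmetric] powr_add[symmetric] add_divide_distrib)
  also have "2 powr real n * (2 * x) = 2 powr real (Suc n) * x"
    by (simp add: powr_add)
  finally show ?case .
qed simp

lemma dil_inv_funpow:
  "(dil_inv ^^ n) u x = complex_of_real (2 powr (- real n / 2)) * u (2 powr (- real n) * x)"
proof (induction n arbitrary: x)
  case (Suc n)
  have "(dil_inv ^^ Suc n) u x = (dil_inv ^^ n) u (x / 2) / complex_of_real (sqrt 2)"
    by (simp add: dil_inv_def)
  also have "\<dots> = complex_of_real (2 powr (- real n / 2) / sqrt 2) * u (2 powr (- real n) * (x / 2))"
    by (simp add: Suc)
  also have "2 powr (- real n / 2) / sqrt 2 = 2 powr (- real (Suc n) / 2)"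
  proof -
    have "- real (Suc n) / 2 = - real n / 2 - 1 / 2"
      by simp
    then show ?thesis
      by (simp only: powr_diff powr_half_sqrt)
  qed
  also have "2 powr (- real n) * (x / 2) = 2 powr (- real (Suc n)) * x"
    by (simp add: powr_diff powr_minus divide_simps)
  finally show ?case .
qed simp

lemma Dp_apply: "Dp p u x = complex_of_real (2 powr (real_of_int p / 2)) * u (2 powr real_of_int p * x)"
  by (auto simp: Dp_def int_pow_def dil_funpow dil_inv_funpow)

lemma Tq_Tq: "Tq a (Tq b u) = Tq (a + b) u"
  by (simp add: fun_eq_iff Tq_apply algebra_simps)

lemma Dp_Dp: "Dp a (Dp b u) = Dp (a + b) u"
proof
  fix x
  have "Dp a (Dp b u) x = complex_of_real (2 powr (real_of_int a / 2) * 2 powr (real_of_int b / 2))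
      * u (2 powr real_of_int b * (2 powr real_of_int a * x))"
    by (simp add: Dp_apply)
  also have "2 powr (real_of_int a / 2) * 2 powr (real_of_int b / 2) = 2 powr (real_of_int (a + b) / 2)"
    by (simp add: powr_add[symmetric] add_divide_distrib)
  also have "2 powr real_of_int b * (2 powr real_of_int a * x) = 2 powr real_of_int (a + b) * x"
    by (simp add: powr_add)
  finally show "Dp a (Dp b u) x = Dp (a + b) u x"
    by (simp only: Dp_apply)
qed

lemma Tq_0 [simp]: "Tq 0 u = u"
  by (simp add: fun_eq_iff Tq_apply)

lemma Dp_0 [simp]: "Dp 0 u = u"
  by (simp add: fun_eq_iff Dp_apply)

lemma Lb_eq_Tq: "Lb L0 n i = Tq n (L0 i)"
  by (simp add: fun_eq_iff Lb_def Tq_apply)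

lemma Kb_eq_Dp: "Kb K0 m s j = Dp m (K0 s j)"
  by (simp add: fun_eq_iff Kb_def Dp_apply)

lemma Tq_Lb: "Tq q (Lb L0 n i) = Lb L0 (n + q) i"
  by (simp add: Lb_eq_Tq Tq_Tq add.commute)

lemma Dp_Kb: "Dp p (Kb K0 m s j) = Kb K0 (m + p) s j"
  by (simp add: Kb_eq_Dp Dp_Dp add.commute)

lemma ip_shift: "ip (\<lambda>x. u (x - c)) (\<lambda>x. w (x - c)) = ip u w"
  unfolding ip_def using lborel_integral_real_affine[of 1 "\<lambda>x. u x * cnj (w x)" "- c"] by simp

lemma ip_scale:
  assumes "a > 0"
  shows "ip (\<lambda>x. complex_of_real b * u (a * x)) (\<lambda>x. complex_of_real b * w (a * x))
    = complex_of_real (b\<^sup>2 / a) * ip u w"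
proof -
  have "ip u w = complex_of_real a * (LINT x|lborel. u (a * x) * cnj (w (a * x)))"
    unfolding ip_def using lborel_integral_real_affine[of a "\<lambda>x. u x * cnj (w x)" 0] assms
    by (simp add: scaleR_conv_of_real)
  moreover have "ip (\<lambda>x. complex_of_real b * u (a * x)) (\<lambda>x. complex_of_real b * w (a * x))
      = complex_of_real (b\<^sup>2) * (LINT x|lborel. u (a * x) * cnj (w (a * x)))"
    unfolding ip_def by (simp add: power2_eq_square algebra_simps)
  ultimately show ?thesis
    using assms by (simp add: field_simps)
qed

lemma ip_Tq: "ip (Tq q u) (Tq q w) = ip u w"
  unfolding Tq_apply by (rule ip_shift)

lemma ip_Dp: "ip (Dp p u) (Dp p w) = ip u w"
proof -
  have "(2 powr (real_of_int p / 2))\<^sup>2 = 2 powr real_of_int p"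
    by (simp add: power2_eq_square powr_add[symmetric])
  then show ?thesis
    unfolding Dp_apply by (simp add: ip_scale)
qed

lemma ip_Tq_right: "ip u (Tq q w) = ip (Tq (- q) u) w"
  using ip_Tq[of "- q" u "Tq q w"] by (simp add: Tq_Tq)

lemma ip_Dp_right: "ip u (Dp p w) = ip (Dp (- p) u) w"
  using ip_Dp[of "- p" u "Dp p w"] by (simp add: Dp_Dp)

lemma sq_int_affine:
  assumes "sq_int u" "a \<noteq> 0"
  shows "sq_int (\<lambda>x. c * u (t + a * x))"
proof -
  have [measurable]: "u \<in> borel_measurable borel"
    using assms by (simp add: sq_int_def)
  have "integrable lborel (\<lambda>x. (cmod (u (t + a * x)))\<^sup>2)"
    using lborel_integrable_real_affine[OF sq_intD(2)[OF assms(1)] assms(2)] by simp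
  then show ?thesis
    by (intro sq_int_cmult[of "\<lambda>x. u (t + a * x)"]) (simp add: sq_int_def)
qed

lemma sq_int_Tq: "sq_int u \<Longrightarrow> sq_int (Tq q u)"
  using sq_int_affine[of u 1 1 "- real_of_int q"] by (simp add: Tq_apply[abs_def])

lemma sq_int_Dp: "sq_int u \<Longrightarrow> sq_int (Dp p u)"
  using sq_int_affine[of u "2 powr real_of_int p" _ 0] by (simp add: Dp_apply[abs_def])

section \<open>The two bases\<close>

lemma onb_onD:
  assumes "onb_on S B"
  shows "sq_int (B i)" "x \<notin> S \<Longrightarrow> B i x = 0" "ip (B i) (B i') = (if i = i' then 1 else 0)"
    "sq_int f \<Longrightarrow> (\<And>x. x \<notin> S \<Longrightarrow> f x = 0) \<Longrightarrow> (\<And>i. ip f (B i) = 0) \<Longrightarrow> AE x in lborel. f x = 0"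
  using assms unfolding onb_on_def by blast+

lemma ip_disjoint_support:
  assumes "\<And>x. u x = 0 \<or> w x = 0"
  shows "ip u w = 0"
proof -
  have "(\<lambda>x. u x * cnj (w x)) = (\<lambda>x. 0)"
    using assms by (force simp: fun_eq_iff)
  then show ?thesis
    by (simp add: ip_def)
qed

lemma onb_on_AE_zero_on:
  assumes onb: "onb_on S B" and [measurable]: "S \<in> sets borel"
    and h: "sq_int h" and orth: "\<And>i. ip h (B i) = 0"
  shows "AE x in lborel. x \<in> S \<longrightarrow> h x = 0"
proof -
  have [measurable]: "h \<in> borel_measurable borel"
    using h by (simp add: sq_int_def)
  define h' where "h' x = h x * indicator S x" for x
  have sq_int_h': "sq_int h'"
  proof -
    have "integrable lborel (\<lambda>x. (cmod (h x))\<^sup>2 * indicator S x)"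
      using h by (intro integrable_real_mult_indicator) (auto simp: sq_int_def)
    moreover have "(\<lambda>x. (cmod (h x))\<^sup>2 * indicator S x) = (\<lambda>x. (cmod (h' x))\<^sup>2)"
      by (simp add: fun_eq_iff h'_def indicator_def)
    moreover have "h' \<in> borel_measurable lborel"
      unfolding h'_def by measurable
    ultimately show ?thesis
      unfolding sq_int_def by simp
  qed
  have ip_h': "ip h' (B i) = ip h (B i)" for i
    unfolding ip_def
  proof (rule Bochner_Integration.integral_cong[OF refl])
    fix x
    show "h' x * cnj (B i x) = h x * cnj (B i x)"
      using onb_onD(2)[OF onb, of x i] by (cases "x \<in> S") (simp_all add: h'_def)
  qed
  have "AE x in lborel. h' x = 0"
    by (rule onb_onD(4)[OF onb sq_int_h']) (simp_all add: h'_def ip_h' orth)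
  then show ?thesis
    by (rule AE_mp) (simp add: h'_def indicator_def)
qed

lemma onb_on_AE_zero_on_affine:
  assumes onb: "onb_on S B" and [measurable]: "S \<in> sets borel" and h: "sq_int h" and "c \<noteq> 0"
    and orth: "\<And>i. ip (\<lambda>x. h (t + c * x)) (B i) = 0"
  shows "AE y in lborel. (y - t) / c \<in> S \<longrightarrow> h y = 0"
proof -
  have [measurable]: "h \<in> borel_measurable borel"
    using h by (simp add: sq_int_def)
  have "sq_int (\<lambda>x. h (t + c * x))"
    using sq_int_affine[OF h \<open>c \<noteq> 0\<close>, of 1 t] by simp
  then have "AE x in lborel. x \<in> S \<longrightarrow> h (t + c * x) = 0"
    by (rule onb_on_AE_zero_on[OF onb _ _ orth, rotated]) simp
  moreover have "Measurable.pred borel (\<lambda>x. x \<in> S \<longrightarrow> h (t + c * x) = 0)"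
    by measurable
  ultimately have "AE y in lborel. - t / c + 1 / c * y \<in> S \<longrightarrow> h (t + c * (- t / c + 1 / c * y)) = 0"
    using \<open>c \<noteq> 0\<close> by (intro AE_borel_affine) auto
  moreover have "- t / c + 1 / c * y = (y - t) / c" "t + c * ((y - t) / c) = y" for y
    using \<open>c \<noteq> 0\<close> by (simp_all add: field_simps)
  ultimately show ?thesis
    by simp
qed

lemma orthonormal_system_Lb:
  assumes L: "onb_on {0..<1} L0"
  shows "orthonormal_system (\<lambda>(i, n). Lb L0 n i)"
  unfolding orthonormal_system_def
proof (intro conjI allI; clarify)
  fix i n
  show "sq_int (Lb L0 n i)"
    unfolding Lb_eq_Tq by (rule sq_int_Tq[OF onb_onD(1)[OF L]])
next
  fix i n i' n'
  show "ip (Lb L0 n i) (Lb L0 n' i') = (if (i, n) = (i', n') then 1 else 0)"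
  proof (cases "n = n'")
    case True
    then show ?thesis
      using onb_onD(3)[OF L] by (simp add: Lb_eq_Tq ip_Tq)
  next
    case False
    have "Lb L0 n i x = 0 \<or> Lb L0 n' i' x = 0" for x
    proof (rule ccontr)
      assume "\<not> ?thesis"
      then have "L0 i (x - real_of_int n) \<noteq> 0" "L0 i' (x - real_of_int n') \<noteq> 0"
        by (simp_all add: Lb_def)
      then have "x - real_of_int n \<in> {0..<1}" "x - real_of_int n' \<in> {0..<1}"
        using onb_onD(2)[OF L] by blast+
      then have "\<lfloor>x\<rfloor> = n" "\<lfloor>x\<rfloor> = n'"
        by (auto intro!: floor_unique)
      with False show False
        by simp
    qed
    then show ?thesis
      using False by (simp add: ip_disjoint_support)
  qed
qed

lemma complete_system_Lb:
  assumes L: "onb_on {0..<1} L0"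
  shows "complete_system (\<lambda>(i, n). Lb L0 n i)"
  unfolding complete_system_def
proof (intro allI impI, elim conjE)
  fix h
  assume h: "sq_int h" and orth: "\<forall>b. ip h (case b of (i, n) \<Rightarrow> Lb L0 n i) = 0"
  have "AE y in lborel. (y - real_of_int n) / 1 \<in> {0..<1} \<longrightarrow> h y = 0" for n
  proof (rule onb_on_AE_zero_on_affine[OF L _ h])
    fix i
    have "(\<lambda>x. h (real_of_int n + 1 * x)) = Tq (- n) h"
      by (simp add: fun_eq_iff Tq_apply add.commute)
    then show "ip (\<lambda>x. h (real_of_int n + 1 * x)) (L0 i) = 0"
      using orth by (simp add: Lb_eq_Tq ip_Tq_right)
  qed auto
  then have "AE y in lborel. \<forall>n. (y - real_of_int n) / 1 \<in> {0..<1} \<longrightarrow> h y = 0"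
    by (rule AE_all_countable[THEN iffD2, rule_format])
  then show "AE y in lborel. h y = 0"
  proof (rule AE_mp, intro AE_I2 impI)
    fix y
    assume "\<forall>n. (y - real_of_int n) / 1 \<in> {0..<1} \<longrightarrow> h y = 0"
    moreover have "(y - real_of_int \<lfloor>y\<rfloor>) / 1 \<in> {0..<1}"
      using of_int_floor_le[of y] real_of_int_floor_add_one_gt[of y]
      by (simp only: div_by_1 atLeastLessThan_iff) linarith
    ultimately show "h y = 0"
      by blast
  qed
qed

definition dyadic_shell :: "bool \<Rightarrow> real set" where
  "dyadic_shell s = (if s then {1..<2} else {-2<..-1})"

lemma dyadic_scale_iff:
  assumes "a > 0"
  shows "1 \<le> 2 powr real_of_int m * a \<and> 2 powr real_of_int m * a < 2 \<longleftrightarrow> m = - \<lfloor>log 2 a\<rfloor>"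
proof -
  have "2 powr real_of_int m * a = 2 powr (real_of_int m + log 2 a)"
    using assms by (simp add: powr_add)
  moreover have "1 \<le> 2 powr y \<and> 2 powr y < 2 \<longleftrightarrow> 0 \<le> y \<and> y < 1" for y :: real
    using powr_le_cancel_iff[of 2 0 y] powr_less_cancel_iff[of 2 y 1] by simp
  ultimately show ?thesis
    by (simp add: floor_eq_iff) linarith
qed

lemma scaled_mem_dyadic_shell_iff:
  "2 powr real_of_int m * x \<in> dyadic_shell s \<longleftrightarrow> x \<noteq> 0 \<and> m = - \<lfloor>log 2 \<bar>x\<bar>\<rfloor> \<and> (s \<longleftrightarrow> 0 < x)"
proof -
  have "y \<in> dyadic_shell s \<longleftrightarrow> 1 \<le> \<bar>y\<bar> \<and> \<bar>y\<bar> < 2 \<and> (s \<longleftrightarrow> 0 < y)" for y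
    by (cases s) (auto simp: dyadic_shell_def)
  moreover have "\<bar>2 powr real_of_int m * x\<bar> = 2 powr real_of_int m * \<bar>x\<bar>"
    by (simp add: abs_mult)
  moreover have "0 < 2 powr real_of_int m * x \<longleftrightarrow> 0 < x"
    by (simp add: zero_less_mult_iff)
  ultimately have "2 powr real_of_int m * x \<in> dyadic_shell s \<longleftrightarrow>
      1 \<le> 2 powr real_of_int m * \<bar>x\<bar> \<and> 2 powr real_of_int m * \<bar>x\<bar> < 2 \<and> (s \<longleftrightarrow> 0 < x)"
    by presburger
  then show ?thesis
    using dyadic_scale_iff[of "\<bar>x\<bar>" m] by (cases "x = 0") auto
qed

lemma Kb_nonzero_imp_scaled_mem:
  assumes "\<And>s. onb_on (dyadic_shell s) (K0 s)" "Kb K0 m s j x \<noteq> 0"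
  shows "2 powr real_of_int m * x \<in> dyadic_shell s"
  using assms onb_onD(2) by (fastforce simp: Kb_def)

lemma orthonormal_system_Kb:
  assumes K: "\<And>s. onb_on (dyadic_shell s) (K0 s)"
  shows "orthonormal_system (\<lambda>(s, j, m). Kb K0 m s j)"
  unfolding orthonormal_system_def
proof (intro conjI allI; clarify)
  fix s j m
  show "sq_int (Kb K0 m s j)"
    unfolding Kb_eq_Dp by (rule sq_int_Dp[OF onb_onD(1)[OF K]])
next
  fix s j m s' j' m'
  show "ip (Kb K0 m s j) (Kb K0 m' s' j') = (if (s, j, m) = (s', j', m') then 1 else 0)"
  proof (cases "s = s' \<and> m = m'")
    case True
    then show ?thesis
      using onb_onD(3)[OF K] by (auto simp: Kb_eq_Dp ip_Dp)
  next
    case False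
    have "Kb K0 m s j x = 0 \<or> Kb K0 m' s' j' x = 0" for x
    proof (rule ccontr)
      assume "\<not> ?thesis"
      then have "2 powr real_of_int m * x \<in> dyadic_shell s" "2 powr real_of_int m' * x \<in> dyadic_shell s'"
        using Kb_nonzero_imp_scaled_mem[OF K] by auto
      with False show False
        by (simp add: scaled_mem_dyadic_shell_iff)
    qed
    then show ?thesis
      using False by (auto simp: ip_disjoint_support)
  qed
qed

lemma complete_system_Kb:
  assumes K: "\<And>s. onb_on (dyadic_shell s) (K0 s)"
  shows "complete_system (\<lambda>(s, j, m). Kb K0 m s j)"
  unfolding complete_system_def
proof (intro allI impI, elim conjE)
  fix h
  assume h: "sq_int h" and orth: "\<forall>b. ip h (case b of (s, j, m) \<Rightarrow> Kb K0 m s j) = 0"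
  have "AE y in lborel. 2 powr real_of_int m * y \<in> dyadic_shell s \<longrightarrow> h y = 0" for m s
  proof -
    have "ip (\<lambda>x. h (0 + 2 powr (- real_of_int m) * x)) (K0 s j) = 0" for j
    proof -
      have "ip (Dp (- m) h) (K0 s j) = 0"
        using orth by (simp add: Kb_eq_Dp ip_Dp_right)
      then show ?thesis
        by (simp add: Dp_apply[abs_def] ip_cmult_left)
    qed
    then have "AE y in lborel. (y - 0) / 2 powr (- real_of_int m) \<in> dyadic_shell s \<longrightarrow> h y = 0"
      by (intro onb_on_AE_zero_on_affine[OF K _ h]) (simp_all add: dyadic_shell_def)
    then show ?thesis
      by (simp add: powr_minus divide_inverse mult.commute)
  qed
  then have "AE y in lborel. \<forall>m s. 2 powr real_of_int m * y \<in> dyadic_shell s \<longrightarrow> h y = 0"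
    by (intro AE_all_countable[THEN iffD2] allI) assumption
  then show "AE y in lborel. h y = 0"
    using AE_lborel_singleton[of 0]
  proof (eventually_elim)
    case (elim y)
    have "2 powr real_of_int (- \<lfloor>log 2 \<bar>y\<bar>\<rfloor>) * y \<in> dyadic_shell (0 < y)"
      using elim(2) by (subst scaled_mem_dyadic_shell_iff) simp
    with elim(1) show "h y = 0"
      by blast
  qed
qed

section \<open>Change of coordinates\<close>

lemma fhat_Tq: "fhat L0 (Tq q u) n i = fhat L0 u (n - q) i"
  using ip_Tq[of q u "Lb L0 (n - q) i"] by (simp add: fhat_def Tq_Lb)

lemma ftil_Dp: "ftil K0 (Dp p u) m s j = ftil K0 u (m - p) s j"
  using ip_Dp[of p u "Kb K0 (m - p) s j"] by (simp add: ftil_def Dp_Kb)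

locale dyadic_bases =
  fixes L0 :: "'i::countable \<Rightarrow> real \<Rightarrow> complex"
    and K0 :: "bool \<Rightarrow> 'j::countable \<Rightarrow> real \<Rightarrow> complex"
  assumes L0_onb: "onb_on {0..<1} L0"
    and K0_onb: "\<And>s. onb_on (dyadic_shell s) (K0 s)"
begin

lemma sq_int_Lb: "sq_int (Lb L0 n i)"
  using orthonormal_systemD(1)[OF orthonormal_system_Lb[OF L0_onb], of "(i, n)"] by simp

lemma sq_int_Kb: "sq_int (Kb K0 m s j)"
  using orthonormal_systemD(1)[OF orthonormal_system_Kb[OF K0_onb], of "(s, j, m)"] by simp

lemma parseval_Lb:
  assumes "sq_int u" "sq_int v"
  shows "((\<lambda>(i, n). fhat L0 u n i * ip (Lb L0 n i) v) has_sum ip u v) UNIV"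
  using parseval[OF orthonormal_system_Lb[OF L0_onb] complete_system_Lb[OF L0_onb] assms]
  by (simp add: fhat_def case_prod_unfold)

lemma parseval_Kb:
  assumes "sq_int u" "sq_int v"
  shows "((\<lambda>(s, j, m). ftil K0 u m s j * ip (Kb K0 m s j) v) has_sum ip u v) UNIV"
  using parseval[OF orthonormal_system_Kb[OF K0_onb] complete_system_Kb[OF K0_onb] assms]
  by (simp add: ftil_def case_prod_unfold)

lemma ftil_Tq_has_sum:
  assumes "sq_int u"
  shows "((\<lambda>(i, n). alpha L0 K0 s j m i (n + q) * fhat L0 u n i) has_sum ftil K0 (Tq q u) m s j) UNIV"
proof -
  have "ip (Lb L0 n i) (Tq (- q) (Kb K0 m s j)) = alpha L0 K0 s j m i (n + q)" for i n
    by (simp add: ip_Tq_right Tq_Lb alpha_def)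
  moreover have "ip u (Tq (- q) (Kb K0 m s j)) = ftil K0 (Tq q u) m s j"
    by (simp add: ip_Tq_right ftil_def)
  ultimately show ?thesis
    using parseval_Lb[where v = "Tq (- q) (Kb K0 m s j)", OF assms sq_int_Tq[OF sq_int_Kb]]
    by (simp add: mult.commute)
qed

lemma fhat_Dp_has_sum:
  assumes "sq_int u"
  shows "((\<lambda>(s, j, m). cnj (alpha L0 K0 s j (m + p) i n) * ftil K0 u m s j) has_sum fhat L0 (Dp p u) n i) UNIV"
proof -
  have "ip (Kb K0 m s j) (Dp (- p) (Lb L0 n i)) = cnj (alpha L0 K0 s j (m + p) i n)" for s j m
    by (simp add: ip_Dp_right Dp_Kb alpha_def ip_swap[of "Kb K0 _ _ _"])
  moreover have "ip u (Dp (- p) (Lb L0 n i)) = fhat L0 (Dp p u) n i"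
    by (simp add: ip_Dp_right fhat_def)
  ultimately show ?thesis
    using parseval_Kb[where v = "Dp (- p) (Lb L0 n i)", OF assms sq_int_Dp[OF sq_int_Lb]]
    by (simp add: mult.commute)
qed

lemma fhat_Dp_Tq_expansion:
  assumes "sq_int f"
  shows "(\<forall>s j m. (\<lambda>(i, n). alpha L0 K0 s j (m - p) i (n + q) * fhat L0 f n i) summable_on UNIV)
    \<and> ((\<lambda>(s, j, m). cnj (alpha L0 K0 s j m l k) *
          infsum (\<lambda>(i, n). alpha L0 K0 s j (m - p) i (n + q) * fhat L0 f n i) UNIV)
        has_sum fhat L0 (Dp p (Tq q f)) k l) UNIV"
proof -
  have inner: "((\<lambda>(i, n). alpha L0 K0 s j (m - p) i (n + q) * fhat L0 f n i)
      has_sum ftil K0 (Dp p (Tq q f)) m s j) UNIV" for s j m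
    using ftil_Tq_has_sum[OF assms, where m = "m - p"] by (simp add: ftil_Dp)
  show ?thesis
    using fhat_Dp_has_sum[where u = "Dp p (Tq q f)" and p = 0 and i = l and n = k,
        OF sq_int_Dp[OF sq_int_Tq[OF assms]]] inner
    by (auto simp: has_sum_imp_summable[OF inner] infsumI[OF inner])
qed

lemma fhat_Tq_Dp_expansion:
  assumes "sq_int f"
  shows "(\<forall>s j m. (\<lambda>(i, n). alpha L0 K0 s j (m - p) i n * fhat L0 f n i) summable_on UNIV)
    \<and> ((\<lambda>(s, j, m). cnj (alpha L0 K0 s j m l (k - q)) *
          infsum (\<lambda>(i, n). alpha L0 K0 s j (m - p) i n * fhat L0 f n i) UNIV)
        has_sum fhat L0 (Tq q (Dp p f)) k l) UNIV"
proof -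
  have inner: "((\<lambda>(i, n). alpha L0 K0 s j (m - p) i n * fhat L0 f n i)
      has_sum ftil K0 (Dp p f) m s j) UNIV" for s j m
    using ftil_Tq_has_sum[OF assms, where m = "m - p" and q = 0] by (simp add: ftil_Dp)
  show ?thesis
    using fhat_Dp_has_sum[where u = "Dp p f" and p = 0 and i = l and n = "k - q",
        OF sq_int_Dp[OF assms]] inner
    by (auto simp: has_sum_imp_summable[OF inner] infsumI[OF inner] fhat_Tq)
qed

lemma ftil_Dp_Tq_expansion:
  assumes "sq_int f"
  shows "(\<forall>i n. (\<lambda>(s, j, m). cnj (alpha L0 K0 s j m i (n - q)) * ftil K0 f m s j) summable_on UNIV)
    \<and> ((\<lambda>(i, n). alpha L0 K0 \<sigma> l (k - p) i n *
          infsum (\<lambda>(s, j, m). cnj (alpha L0 K0 s j m i (n - q)) * ftil K0 f m s j) UNIV)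
        has_sum ftil K0 (Dp p (Tq q f)) k \<sigma> l) UNIV"
proof -
  have inner: "((\<lambda>(s, j, m). cnj (alpha L0 K0 s j m i (n - q)) * ftil K0 f m s j)
      has_sum fhat L0 (Tq q f) n i) UNIV" for i n
    using fhat_Dp_has_sum[OF assms, where p = 0 and n = "n - q"] by (simp add: fhat_Tq)
  show ?thesis
    using ftil_Tq_has_sum[where u = "Tq q f" and s = \<sigma> and j = l and m = "k - p" and q = 0,
        OF sq_int_Tq[OF assms]] inner
    by (auto simp: has_sum_imp_summable[OF inner] infsumI[OF inner] ftil_Dp)
qed

lemma ftil_Tq_Dp_expansion:
  assumes "sq_int f"
  shows "(\<forall>i n. (\<lambda>(s, j, m). cnj (alpha L0 K0 s j (m + p) i (n - q)) * ftil K0 f m s j) summable_on UNIV)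
    \<and> ((\<lambda>(i, n). alpha L0 K0 \<sigma> l k i n *
          infsum (\<lambda>(s, j, m). cnj (alpha L0 K0 s j (m + p) i (n - q)) * ftil K0 f m s j) UNIV)
        has_sum ftil K0 (Tq q (Dp p f)) k \<sigma> l) UNIV"
proof -
  have inner: "((\<lambda>(s, j, m). cnj (alpha L0 K0 s j (m + p) i (n - q)) * ftil K0 f m s j)
      has_sum fhat L0 (Tq q (Dp p f)) n i) UNIV" for i n
    using fhat_Dp_has_sum[OF assms, where n = "n - q"] by (simp add: fhat_Tq)
  show ?thesis
    using ftil_Tq_has_sum[where u = "Tq q (Dp p f)" and s = \<sigma> and j = l and m = k and q = 0,
        OF sq_int_Tq[OF sq_int_Dp[OF assms]]] inner
    by (auto simp: has_sum_imp_summable[OF inner] infsumI[OF inner])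
qed

end

theorem lemma3:
  fixes L0 :: "'i::countable \<Rightarrow> real \<Rightarrow> complex"
    and K0 :: "bool \<Rightarrow> 'j::countable \<Rightarrow> real \<Rightarrow> complex"
    and f :: "real \<Rightarrow> complex"
    and p q :: int
  assumes L0_onb: "onb_on {0..<1} L0"
    and Kp_onb: "onb_on {1..<2} (K0 True)"
    and Km_onb: "onb_on {-2<..-1} (K0 False)"
    and f_L2: "sq_int f"
  shows
   "(\<forall>l k. (\<forall>s j m. (\<lambda>(i, n). alpha L0 K0 s j (m - p) i (n + q) * fhat L0 f n i) summable_on UNIV)
       \<and> ((\<lambda>(s, j, m). cnj (alpha L0 K0 s j m l k) *
             infsum (\<lambda>(i, n). alpha L0 K0 s j (m - p) i (n + q) * fhat L0 f n i) UNIV)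
           has_sum fhat L0 (Dp p (Tq q f)) k l) UNIV)
  \<and> (\<forall>l k. (\<forall>s j m. (\<lambda>(i, n). alpha L0 K0 s j (m - p) i n * fhat L0 f n i) summable_on UNIV)
       \<and> ((\<lambda>(s, j, m). cnj (alpha L0 K0 s j m l (k - q)) *
             infsum (\<lambda>(i, n). alpha L0 K0 s j (m - p) i n * fhat L0 f n i) UNIV)
           has_sum fhat L0 (Tq q (Dp p f)) k l) UNIV)
  \<and> (\<forall>\<sigma> l k. (\<forall>i n. (\<lambda>(s, j, m). cnj (alpha L0 K0 s j m i (n - q)) * ftil K0 f m s j) summable_on UNIV)
       \<and> ((\<lambda>(i, n). alpha L0 K0 \<sigma> l (k - p) i n *
             infsum (\<lambda>(s, j, m). cnj (alpha L0 K0 s j m i (n - q)) * ftil K0 f m s j) UNIV)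
           has_sum ftil K0 (Dp p (Tq q f)) k \<sigma> l) UNIV)
  \<and> (\<forall>\<sigma> l k. (\<forall>i n. (\<lambda>(s, j, m). cnj (alpha L0 K0 s j (m + p) i (n - q)) * ftil K0 f m s j) summable_on UNIV)
       \<and> ((\<lambda>(i, n). alpha L0 K0 \<sigma> l k i n *
             infsum (\<lambda>(s, j, m). cnj (alpha L0 K0 s j (m + p) i (n - q)) * ftil K0 f m s j) UNIV)
           has_sum ftil K0 (Tq q (Dp p f)) k \<sigma> l) UNIV)"
proof -
  interpret dyadic_bases L0 K0
  proof
    show "onb_on (dyadic_shell s) (K0 s)" for s
      using Kp_onb Km_onb by (cases s) (simp_all add: dyadic_shell_def)
  qed (rule L0_onb)
  show ?thesis
    by (simp only: fhat_Dp_Tq_expansion[OF f_L2] fhat_Tq_Dp_expansion[OF f_L2]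
        ftil_Dp_Tq_expansion[OF f_L2] ftil_Tq_Dp_expansion[OF f_L2] simp_thms)
qed

end
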